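(* Let $f$ be a 3-CNF formula with clauses $C_1,\dots,C_m$ over variables $x_1,\dots,x_n$, each clause being a disjunction of three literal occurrences. Let $G$ be the graph constructed as follows: for each clause $C_i=x\vee y\vee z$ introduce four vertices $x^i,y^i,z^i,c^i$ forming a clique $G_i$, where $x^i,y^i,z^i$ are associated with the literals $x,y,z$ of $C_i$ (so $G$ has $4m$ vertices); additionally, for any two vertices $u,v$ in different cliques $G_i\ne G_j$ such that the literal associated with $u$ is the negation of the literal associated with $v$, add the edge $uv$. Then $\alpha(G)=m$, $\mathrm{diss}(G)=\alpha(G)+\nu_s(G)$, and $$f\text{ is satisfiable}\iff \mathrm{diss}(G)=2\alpha(G)\iff \mathrm{diss}(G)=2\nu_s(G).$$
   Context: All graphs are finite, simple and undirected. A set $I$ of vertices of a graph $G$ is a dissociation set if the induced subgraph $G[I]$ has maximum degree at most $1$; $\mathrm{diss}(G)$ is the maximum order of a dissociation set in $G$. $\alpha(G)$ is the independence number. An induced matching is a matching $N$ such that the subgraph of $G$ induced by the vertices covered by $N$ has edge set exactly $N$; $\nu_s(G)$ is the maximum size of an induced matching in $G$. *)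

theory Defs
  imports Main
begin

definition independent_set :: "'v set \<Rightarrow> ('v \<Rightarrow> 'v \<Rightarrow> bool) \<Rightarrow> 'v set \<Rightarrow> bool" where
  "independent_set V E I \<longleftrightarrow> I \<subseteq> V \<and> (\<forall>u\<in>I. \<forall>v\<in>I. \<not> E u v)"

definition indep_number :: "'v set \<Rightarrow> ('v \<Rightarrow> 'v \<Rightarrow> bool) \<Rightarrow> nat" where
  "indep_number V E = Max {card I | I. independent_set V E I}"

definition dissociation_set :: "'v set \<Rightarrow> ('v \<Rightarrow> 'v \<Rightarrow> bool) \<Rightarrow> 'v set \<Rightarrow> bool" where
  "dissociation_set V E I \<longleftrightarrow> I \<subseteq> V \<and> (\<forall>u\<in>I. card {v\<in>I. E u v} \<le> 1)"

definition diss :: "'v set \<Rightarrow> ('v \<Rightarrow> 'v \<Rightarrow> bool) \<Rightarrow> nat" where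
  "diss V E = Max {card I | I. dissociation_set V E I}"

definition induced_matching :: "'v set \<Rightarrow> ('v \<Rightarrow> 'v \<Rightarrow> bool) \<Rightarrow> 'v set set \<Rightarrow> bool" where
  "induced_matching V E N \<longleftrightarrow>
     (\<forall>e\<in>N. \<exists>u v. e = {u, v} \<and> u \<in> V \<and> v \<in> V \<and> E u v) \<and>
     (\<forall>e\<in>N. \<forall>e'\<in>N. e \<noteq> e' \<longrightarrow> e \<inter> e' = {}) \<and>
     (\<forall>u\<in>\<Union>N. \<forall>v\<in>\<Union>N. E u v \<longrightarrow> {u, v} \<in> N)"

definition induced_matching_number :: "'v set \<Rightarrow> ('v \<Rightarrow> 'v \<Rightarrow> bool) \<Rightarrow> nat" where
  "induced_matching_number V E = Max {card N | N. induced_matching V E N}"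

text \<open>A literal is a pair (variable index, polarity); (x, True) is x, (x, False) is its negation.\<close>
type_synonym lit = "nat \<times> bool"
type_synonym clause3 = "lit \<times> lit \<times> lit"

definition neg_lit :: "lit \<Rightarrow> lit" where
  "neg_lit l = (fst l, \<not> snd l)"

definition lit_true :: "(nat \<Rightarrow> bool) \<Rightarrow> lit \<Rightarrow> bool" where
  "lit_true \<sigma> l \<longleftrightarrow> \<sigma> (fst l) = snd l"

definition clause_lit :: "clause3 \<Rightarrow> nat \<Rightarrow> lit" where
  "clause_lit C k = (case C of (a, b, c) \<Rightarrow> if k = 0 then a else if k = 1 then b else c)"

definition clause_sat :: "(nat \<Rightarrow> bool) \<Rightarrow> clause3 \<Rightarrow> bool" where
  "clause_sat \<sigma> C \<longleftrightarrow> (\<exists>k<3. lit_true \<sigma> (clause_lit C k))"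

definition satisfiable :: "clause3 list \<Rightarrow> bool" where
  "satisfiable f \<longleftrightarrow> (\<exists>\<sigma>. \<forall>C\<in>set f. clause_sat \<sigma> C)"

text \<open>Vertex (i,k) with i < m: k = 0,1,2 are x^i, y^i, z^i (the three literal occurrences
  of clause C_i), k = 3 is c^i.\<close>
definition cnf_vertices :: "clause3 list \<Rightarrow> (nat \<times> nat) set" where
  "cnf_vertices f = {(i, k). i < length f \<and> k < 4}"

definition cnf_edge :: "clause3 list \<Rightarrow> nat \<times> nat \<Rightarrow> nat \<times> nat \<Rightarrow> bool" where
  "cnf_edge f u v \<longleftrightarrow> u \<in> cnf_vertices f \<and> v \<in> cnf_vertices f \<and> u \<noteq> v \<and>
     (fst u = fst v \<or>
      (snd u < 3 \<and> snd v < 3 \<and>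
       clause_lit (f ! fst u) (snd u) = neg_lit (clause_lit (f ! fst v) (snd v))))"

end

theory Submission
  imports Defs
begin

text \<open>
  Each clique \<open>G\<^sub>i\<close> meets an independent set at most once and the vertices \<open>c\<^sup>i\<close> are
  independent, so \<open>\<alpha>(G) = m\<close>. Everything else is governed by independent sets \<open>T\<close> of literal
  vertices. Such a \<open>T\<close> gives the dissociation set \<open>T \<union> {c\<^sup>i}\<close> and the induced matching of the
  edges \<open>t c\<^sup>i\<close>. Conversely, choosing a literal endpoint of every edge of an induced matching gives
  such a \<open>T\<close>; and a dissociation set meets each clique in at most two vertices, the cliques met
  twice forming an induced matching. Hence \<open>\<nu>\<^sub>s(G) = max |T| \<le> m\<close> and \<open>diss(G) = m + \<nu>\<^sub>s(G)\<close>.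
  Finally \<open>|T| = m\<close> means that \<open>T\<close> picks one literal in every clause without picking two
  complementary ones, i.e. a satisfying assignment.
\<close>

lemma
  assumes "finite A" and "\<And>J. P J \<Longrightarrow> J \<subseteq> A"
  shows card_le_Max_card: "P I \<Longrightarrow> card I \<le> Max {card J | J. P J}"
    and Max_card_attained: "P I \<Longrightarrow> \<exists>J. P J \<and> card J = Max {card J | J. P J}"
proof -
  have fin: "finite {card J | J. P J}"
    by (rule finite_subset[of _ "card ` Pow A"]) (use assms in auto)
  show "P I \<Longrightarrow> card I \<le> Max {card J | J. P J}"
    using fin by (intro Max_ge) auto
  assume "P I"
  then have "Max {card J | J. P J} \<in> {card J | J. P J}"
    using fin by (intro Max_in) auto
  then show "\<exists>J. P J \<and> card J = Max {card J | J. P J}"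
    by auto
qed

lemma
  assumes "induced_matching V E N"
  shows induced_matching_edge: "e \<in> N \<Longrightarrow> \<exists>u v. e = {u, v} \<and> u \<in> V \<and> v \<in> V \<and> E u v"
    and induced_matching_disjoint: "e \<in> N \<Longrightarrow> e' \<in> N \<Longrightarrow> e \<noteq> e' \<Longrightarrow> e \<inter> e' = {}"
    and induced_matching_induced: "u \<in> \<Union>N \<Longrightarrow> v \<in> \<Union>N \<Longrightarrow> E u v \<Longrightarrow> {u, v} \<in> N"
  using assms unfolding induced_matching_def by meson+

lemma induced_matching_subset_Pow: "induced_matching V E N \<Longrightarrow> N \<subseteq> Pow V"
  by (blast dest: induced_matching_edge)

lemma card_le_indep_number:
  "finite V \<Longrightarrow> independent_set V E I \<Longrightarrow> card I \<le> indep_number V E"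
  unfolding indep_number_def by (rule card_le_Max_card) (auto simp: independent_set_def)

lemma indep_number_attained:
  "finite V \<Longrightarrow> \<exists>I. independent_set V E I \<and> card I = indep_number V E"
  unfolding indep_number_def
  by (rule Max_card_attained[where I = "{}"]) (auto simp: independent_set_def)

lemma card_le_diss:
  "finite V \<Longrightarrow> dissociation_set V E D \<Longrightarrow> card D \<le> diss V E"
  unfolding diss_def by (rule card_le_Max_card) (auto simp: dissociation_set_def)

lemma diss_attained:
  "finite V \<Longrightarrow> \<exists>D. dissociation_set V E D \<and> card D = diss V E"
  unfolding diss_def
  by (rule Max_card_attained[where I = "{}"]) (auto simp: dissociation_set_def)

lemma card_le_induced_matching_number:
  "finite V \<Longrightarrow> induced_matching V E N \<Longrightarrow> card N \<le> induced_matching_number V E"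
  unfolding induced_matching_number_def
  by (rule card_le_Max_card[of "Pow V"]) (auto dest: induced_matching_subset_Pow)

lemma induced_matching_number_attained:
  "finite V \<Longrightarrow> \<exists>N. induced_matching V E N \<and> card N = induced_matching_number V E"
  unfolding induced_matching_number_def
  by (rule Max_card_attained[of "Pow V" _ "{}"])
    (auto simp: induced_matching_def dest: induced_matching_subset_Pow)

lemma dissociation_set_iff:
  assumes "finite I"
  shows "dissociation_set V E I \<longleftrightarrow>
    I \<subseteq> V \<and> (\<forall>u\<in>I. \<forall>v\<in>I. \<forall>w\<in>I. E u v \<longrightarrow> E u w \<longrightarrow> v = w)"
proof -
  have "card {v\<in>I. E u v} \<le> 1 \<longleftrightarrow> (\<forall>v\<in>I. \<forall>w\<in>I. E u v \<longrightarrow> E u w \<longrightarrow> v = w)" for u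
    using card_le_Suc0_iff_eq[of "{v\<in>I. E u v}"] assms by auto
  then show ?thesis
    by (auto simp: dissociation_set_def)
qed

lemma card_clique_le_2_if_dissociation_set:
  assumes "finite V" "dissociation_set V E D" "K \<subseteq> D"
    and clique: "\<And>a b. a \<in> K \<Longrightarrow> b \<in> K \<Longrightarrow> a \<noteq> b \<Longrightarrow> E a b"
  shows "card K \<le> 2"
proof (cases "K = {}")
  case False
  then obtain a where a: "a \<in> K" by blast
  have D: "D \<subseteq> V" "card {v\<in>D. E a v} \<le> 1"
    using assms a unfolding dissociation_set_def by auto
  have "finite D"
    using D(1) \<open>finite V\<close> by (rule finite_subset)
  have "K - {a} \<subseteq> {v\<in>D. E a v}"
    using a clique \<open>K \<subseteq> D\<close> by blast
  then have "card (K - {a}) \<le> 1"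
    using D(2) \<open>finite D\<close> card_mono[of "{v\<in>D. E a v}" "K - {a}"] by simp
  moreover have "card K = Suc (card (K - {a}))"
    using a \<open>finite D\<close> \<open>K \<subseteq> D\<close> by (metis card_Suc_Diff1 finite_subset)
  ultimately show ?thesis
    by simp
qed simp

lemma induced_matching_if_edges_in_dissociation_set:
  assumes "finite V" "dissociation_set V E D" and sym: "\<And>u v. E u v \<Longrightarrow> E v u"
    and M: "\<And>e. e \<in> M \<Longrightarrow> \<exists>u v. e = {u, v} \<and> u \<in> D \<and> v \<in> D \<and> E u v"
  shows "induced_matching V E M"
proof -
  have DV: "D \<subseteq> V"
    using assms(2) by (simp add: dissociation_set_def)
  then have "finite D"
    using \<open>finite V\<close> by (rule finite_subset)
  then have unique:
    "\<And>u v w. u \<in> D \<Longrightarrow> v \<in> D \<Longrightarrow> w \<in> D \<Longrightarrow> E u v \<Longrightarrow> E u w \<Longrightarrow> v = w"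
    using assms(2) by (auto simp: dissociation_set_iff)
  have partner: "\<exists>w. e = {u, w} \<and> u \<in> D \<and> w \<in> D \<and> E u w" if "e \<in> M" "u \<in> e" for e u
    using M[OF \<open>e \<in> M\<close>] \<open>u \<in> e\<close> sym by (auto simp: insert_commute)
  have "e \<inter> e' = {}" if "e \<in> M" "e' \<in> M" "e \<noteq> e'" for e e'
  proof (rule ccontr)
    assume "e \<inter> e' \<noteq> {}"
    then obtain u where "u \<in> e" "u \<in> e'" by blast
    then show False
      using partner[OF \<open>e \<in> M\<close>] partner[OF \<open>e' \<in> M\<close>] unique \<open>e \<noteq> e'\<close> by metis
  qed
  moreover have "{u, v} \<in> M" if "u \<in> \<Union>M" "v \<in> \<Union>M" "E u v" for u v
  proof -
    obtain e w where "e \<in> M" "e = {u, w}" "u \<in> D" "w \<in> D" "E u w"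
      using partner \<open>u \<in> \<Union>M\<close> by blast
    moreover have "v \<in> D"
      using M \<open>v \<in> \<Union>M\<close> by blast
    ultimately show ?thesis
      using unique \<open>E u v\<close> by metis
  qed
  ultimately show ?thesis
    using M DV unfolding induced_matching_def by (simp add: subset_iff) meson
qed

lemma
  assumes N: "induced_matching V E N" and irrefl: "\<And>v. \<not> E v v"
    and pick: "\<And>e. e \<in> N \<Longrightarrow> r e \<in> e"
  shows independent_set_image_induced_matching: "independent_set V E (r ` N)"
    and card_image_induced_matching: "card (r ` N) = card N"
proof -
  have meet: "e = e'" if "e \<in> N" "e' \<in> N" "x \<in> e" "x \<in> e'" for e e' x
    using induced_matching_disjoint[OF N] that by blast
  have "inj_on r N"
    using pick meet by (intro inj_onI) metis
  then show "card (r ` N) = card N"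
    by (rule card_image)
  have "\<not> E (r e) (r e')" if "e \<in> N" "e' \<in> N" for e e'
  proof
    assume E: "E (r e) (r e')"
    then have "{r e, r e'} \<in> N"
      using induced_matching_induced[OF N] pick that by blast
    then have "{r e, r e'} = e" "{r e, r e'} = e'"
      using meet pick that by (meson insertI1 insertI2 singletonI)+
    then have "e = e'"
      by simp
    then show False
      using irrefl E by metis
  qed
  moreover have "r ` N \<subseteq> V"
    using induced_matching_subset_Pow[OF N] pick by blast
  ultimately show "independent_set V E (r ` N)"
    unfolding independent_set_def by blast
qed

lemma lit_true_neg_lit: "lit_true \<sigma> (neg_lit l) \<longleftrightarrow> \<not> lit_true \<sigma> l"
  by (simp add: lit_true_def neg_lit_def)

definition literal_vertices :: "clause3 list \<Rightarrow> (nat \<times> nat) set" where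
  "literal_vertices f = {(i, k). i < length f \<and> k < 3}"

definition clause_vertices :: "clause3 list \<Rightarrow> (nat \<times> nat) set" where
  "clause_vertices f = (\<lambda>i. (i, 3)) ` {..<length f}"

definition clause_clique :: "nat \<Rightarrow> (nat \<times> nat) set" where
  "clause_clique i = {(i, k) | k. k < 4}"

definition vertex_literal :: "clause3 list \<Rightarrow> nat \<times> nat \<Rightarrow> lit" where
  "vertex_literal f v = clause_lit (f ! fst v) (snd v)"

definition literal_independent :: "clause3 list \<Rightarrow> (nat \<times> nat) set \<Rightarrow> bool" where
  "literal_independent f T \<longleftrightarrow>
     independent_set (cnf_vertices f) (cnf_edge f) T \<and> T \<subseteq> literal_vertices f"

lemma finite_cnf_vertices: "finite (cnf_vertices f)"
  by (rule finite_subset[of _ "{..<length f} \<times> {..<4}"]) (auto simp: cnf_vertices_def)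

lemma cnf_edge_irrefl: "\<not> cnf_edge f u u"
  by (simp add: cnf_edge_def)

lemma cnf_edge_sym: "cnf_edge f u v \<Longrightarrow> cnf_edge f v u"
  by (auto simp: cnf_edge_def neg_lit_def)

lemma cnf_edge_same_clause:
  "u \<in> cnf_vertices f \<Longrightarrow> v \<in> cnf_vertices f \<Longrightarrow> u \<noteq> v \<Longrightarrow> fst u = fst v \<Longrightarrow> cnf_edge f u v"
  by (simp add: cnf_edge_def)

lemma cnf_edge_clause_vertex:
  "cnf_edge f u v \<Longrightarrow> snd u = 3 \<or> snd v = 3 \<Longrightarrow> fst u = fst v"
  by (auto simp: cnf_edge_def)

lemma cnf_edge_complementary:
  assumes "u \<in> literal_vertices f" "v \<in> literal_vertices f"
    and "vertex_literal f u = neg_lit (vertex_literal f v)"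
  shows "cnf_edge f u v"
proof -
  have "neg_lit l \<noteq> l" for l
    by (simp add: neg_lit_def prod_eq_iff)
  then have "u \<noteq> v"
    using assms(3) by metis
  then show ?thesis
    using assms by (auto simp: cnf_edge_def cnf_vertices_def literal_vertices_def vertex_literal_def)
qed

lemma cnf_edge_different_clauses:
  "cnf_edge f u v \<Longrightarrow> fst u \<noteq> fst v \<Longrightarrow> vertex_literal f u = neg_lit (vertex_literal f v)"
  by (simp add: cnf_edge_def vertex_literal_def)

lemma cnf_edge_literal_endpoint:
  assumes "cnf_edge f u v"
  shows "u \<in> literal_vertices f \<or> v \<in> literal_vertices f"
proof (rule ccontr)
  assume "\<not> ?thesis"
  then have "snd u = 3" "snd v = 3"
    using assms by (auto simp: cnf_edge_def cnf_vertices_def literal_vertices_def)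
  moreover have "fst u = fst v"
    using cnf_edge_clause_vertex[OF assms] calculation by blast
  ultimately show False
    using assms cnf_edge_irrefl by (metis prod.collapse)
qed

lemma inj_on_fst_independent_set:
  "independent_set (cnf_vertices f) (cnf_edge f) I \<Longrightarrow> inj_on fst I"
  unfolding independent_set_def inj_on_def by (metis cnf_edge_same_clause subsetD)

lemma card_independent_set_le_length:
  assumes "independent_set (cnf_vertices f) (cnf_edge f) I"
  shows "card I \<le> length f"
proof -
  have "fst ` I \<subseteq> {..<length f}"
    using assms by (auto simp: independent_set_def cnf_vertices_def)
  then have "card (fst ` I) \<le> length f"
    by (metis card_lessThan card_mono finite_lessThan)
  then show ?thesis
    using inj_on_fst_independent_set[OF assms] by (simp add: card_image)
qed

lemma card_clause_vertices: "card (clause_vertices f) = length f"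
  unfolding clause_vertices_def by (subst card_image) (auto simp: inj_on_def)

lemma independent_set_clause_vertices:
  "independent_set (cnf_vertices f) (cnf_edge f) (clause_vertices f)"
  by (auto simp: independent_set_def clause_vertices_def cnf_vertices_def cnf_edge_def)

lemma indep_number_cnf_graph: "indep_number (cnf_vertices f) (cnf_edge f) = length f"
proof -
  obtain I where "independent_set (cnf_vertices f) (cnf_edge f) I"
    and "card I = indep_number (cnf_vertices f) (cnf_edge f)"
    using indep_number_attained[OF finite_cnf_vertices] by blast
  then have "indep_number (cnf_vertices f) (cnf_edge f) \<le> length f"
    using card_independent_set_le_length by metis
  moreover have "length f \<le> indep_number (cnf_vertices f) (cnf_edge f)"
    using card_le_indep_number[OF finite_cnf_vertices independent_set_clause_vertices]
    by (simp add: card_clause_vertices)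
  ultimately show ?thesis
    by simp
qed

lemma literal_independent_of_induced_matching:
  assumes N: "induced_matching (cnf_vertices f) (cnf_edge f) N"
  obtains T where "literal_independent f T" and "card T = card N"
proof -
  have "\<exists>x. x \<in> e \<and> x \<in> literal_vertices f" if "e \<in> N" for e
  proof -
    obtain u v where "e = {u, v}" "cnf_edge f u v"
      using induced_matching_edge[OF N \<open>e \<in> N\<close>] by blast
    then show ?thesis
      using cnf_edge_literal_endpoint by blast
  qed
  then obtain r where r: "\<And>e. e \<in> N \<Longrightarrow> r e \<in> e \<and> r e \<in> literal_vertices f"
    by metis
  have "literal_independent f (r ` N)"
    using independent_set_image_induced_matching[OF N cnf_edge_irrefl] r
    by (auto simp: literal_independent_def)
  moreover have "card (r ` N) = card N"
    using card_image_induced_matching[OF N cnf_edge_irrefl] r by blast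
  ultimately show ?thesis
    using that by blast
qed

lemma
  assumes T: "literal_independent f T"
  shows dissociation_set_of_literal_independent:
      "dissociation_set (cnf_vertices f) (cnf_edge f) (T \<union> clause_vertices f)"
    and card_dissociation_set_of_literal_independent:
      "card (T \<union> clause_vertices f) = length f + card T"
proof -
  have indep: "independent_set (cnf_vertices f) (cnf_edge f) T"
    and TL: "T \<subseteq> literal_vertices f"
    using T by (auto simp: literal_independent_def)
  have disj: "T \<inter> clause_vertices f = {}"
    using TL by (auto simp: literal_vertices_def clause_vertices_def)
  have fin: "finite T"
    using indep finite_cnf_vertices finite_subset by (auto simp: independent_set_def)
  show "card (T \<union> clause_vertices f) = length f + card T"
    using card_Un_disjoint[OF fin _ disj] card_clause_vertices
    by (simp add: clause_vertices_def)
  have unique: "v = w"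
    if "u \<in> T \<union> clause_vertices f" "v \<in> T \<union> clause_vertices f" "w \<in> T \<union> clause_vertices f"
      and "cnf_edge f u v" "cnf_edge f u w" for u v w
  proof (cases "u \<in> T")
    case True
    \<comment> \<open>The only neighbour of a literal vertex among the clause vertices is the one of its own clause.\<close>
    then have "v \<in> clause_vertices f" "w \<in> clause_vertices f"
      using that indep by (auto simp: independent_set_def)
    then have "snd v = 3" "snd w = 3"
      by (auto simp: clause_vertices_def)
    moreover from this have "fst v = fst u" "fst w = fst u"
      using that(4,5) cnf_edge_clause_vertex by metis+
    ultimately show ?thesis
      by (simp add: prod_eq_iff)
  next
    case False
    \<comment> \<open>A clause vertex has exactly the literal vertices of its clause as neighbours, and T meets each clause at most once.\<close>
    then have "snd u = 3"
      using that by (auto simp: clause_vertices_def)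
    then have "fst v = fst u" "fst w = fst u"
      using that(4,5) cnf_edge_clause_vertex by metis+
    moreover have "v \<noteq> u" "w \<noteq> u"
      using that(4,5) cnf_edge_irrefl by metis+
    ultimately have "v \<notin> clause_vertices f" "w \<notin> clause_vertices f"
      using \<open>snd u = 3\<close> by (auto simp: clause_vertices_def prod_eq_iff)
    then have "v \<in> T" "w \<in> T"
      using that(2,3) by blast+
    with \<open>fst v = fst u\<close> \<open>fst w = fst u\<close> show ?thesis
      using inj_on_fst_independent_set[OF indep] by (auto simp: inj_on_def)
  qed
  have "T \<union> clause_vertices f \<subseteq> cnf_vertices f"
    using indep by (auto simp: independent_set_def clause_vertices_def cnf_vertices_def)
  moreover have "finite (T \<union> clause_vertices f)"
    using fin by (simp add: clause_vertices_def)
  ultimately show "dissociation_set (cnf_vertices f) (cnf_edge f) (T \<union> clause_vertices f)"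
    using unique by (simp only: dissociation_set_iff) blast
qed

lemma
  assumes T: "literal_independent f T"
  defines "N \<equiv> (\<lambda>t. {t, (fst t, 3)}) ` T"
  shows induced_matching_of_literal_independent: "induced_matching (cnf_vertices f) (cnf_edge f) N"
    and card_induced_matching_of_literal_independent: "card N = card T"
proof -
  have lit: "\<And>t. t \<in> T \<Longrightarrow> fst t < length f \<and> snd t < 3"
    using T by (auto simp: literal_independent_def literal_vertices_def)
  have "inj_on (\<lambda>t. {t, (fst t, 3)}) T"
    using lit by (intro inj_onI) (auto simp: doubleton_eq_iff)
  then show "card N = card T"
    unfolding N_def by (rule card_image)
  \<comment> \<open>Each pair is an edge of the dissociation set obtained by adding all clause vertices to T.\<close>
  have "\<exists>u v. e = {u, v} \<and> u \<in> T \<union> clause_vertices f \<and> v \<in> T \<union> clause_vertices f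
      \<and> cnf_edge f u v" if "e \<in> N" for e
  proof -
    obtain t where "t \<in> T" "e = {t, (fst t, 3)}"
      using \<open>e \<in> N\<close> unfolding N_def by blast
    moreover from this have "(fst t, 3) \<in> clause_vertices f" "cnf_edge f t (fst t, 3)"
      using lit[of t] by (cases t; auto simp: clause_vertices_def cnf_edge_def cnf_vertices_def)+
    ultimately show ?thesis
      by blast
  qed
  then show "induced_matching (cnf_vertices f) (cnf_edge f) N"
    using induced_matching_if_edges_in_dissociation_set[OF finite_cnf_vertices
        dissociation_set_of_literal_independent[OF T] cnf_edge_sym] by blast
qed

lemma card_dissociation_set_le_cnf_graph:
  assumes D: "dissociation_set (cnf_vertices f) (cnf_edge f) D"
  shows "card D \<le> length f + card {i. card (D \<inter> clause_clique i) = 2}"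
proof -
  let ?S = "{i. card (D \<inter> clause_clique i) = 2}"
  have DV: "D \<subseteq> cnf_vertices f"
    using D by (simp add: dissociation_set_def)
  have le2: "card (D \<inter> clause_clique i) \<le> 2" for i
  proof (rule card_clique_le_2_if_dissociation_set[OF finite_cnf_vertices D])
    fix a b assume "a \<in> D \<inter> clause_clique i" "b \<in> D \<inter> clause_clique i" "a \<noteq> b"
    then show "cnf_edge f a b"
      using DV by (intro cnf_edge_same_clause) (auto simp: clause_clique_def)
  qed blast
  have S: "?S \<subseteq> {..<length f}"
  proof
    fix i assume "i \<in> ?S"
    then have "D \<inter> clause_clique i \<noteq> {}"
      by (metis (mono_tags) card.empty mem_Collect_eq zero_neq_numeral)
    then obtain v where "v \<in> D" "v \<in> clause_clique i"
      by blast
    then show "i \<in> {..<length f}"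
      using DV by (auto simp: clause_clique_def cnf_vertices_def)
  qed
  have "D = (\<Union>i<length f. D \<inter> clause_clique i)"
    using DV by (auto simp: cnf_vertices_def clause_clique_def)
  then have "card D \<le> (\<Sum>i<length f. card (D \<inter> clause_clique i))"
    using card_UN_le[of "{..<length f}" "\<lambda>i. D \<inter> clause_clique i"] by simp
  also have "\<dots> \<le> (\<Sum>i<length f. 1 + of_bool (i \<in> ?S))"
  proof (rule sum_mono)
    fix i
    show "card (D \<inter> clause_clique i) \<le> 1 + of_bool (i \<in> ?S)"
      using le2[of i] by (cases "i \<in> ?S") auto
  qed
  also have "\<dots> = (\<Sum>i<length f. 1) + (\<Sum>i<length f. of_bool (i \<in> ?S))"
    by (rule sum.distrib)
  also have "\<dots> = length f + card ?S"
    using S by (simp add: Int_absorb1 Int_absorb2)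
  finally show ?thesis .
qed

lemma induced_matching_of_dissociation_set_cnf_graph:
  assumes D: "dissociation_set (cnf_vertices f) (cnf_edge f) D"
  obtains N where "induced_matching (cnf_vertices f) (cnf_edge f) N"
    and "card D \<le> length f + card N"
proof -
  let ?S = "{i. card (D \<inter> clause_clique i) = 2}"
  let ?N = "(\<lambda>i. D \<inter> clause_clique i) ` ?S"
  have DV: "D \<subseteq> cnf_vertices f"
    using D by (simp add: dissociation_set_def)
  have "\<exists>u v. e = {u, v} \<and> u \<in> D \<and> v \<in> D \<and> cnf_edge f u v" if "e \<in> ?N" for e
  proof -
    obtain i where "e = D \<inter> clause_clique i" "card e = 2"
      using \<open>e \<in> ?N\<close> by blast
    moreover from this obtain u v where "e = {u, v}" "u \<noteq> v"
      by (meson card_2_iff)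
    ultimately have "u \<in> D \<inter> clause_clique i" "v \<in> D \<inter> clause_clique i" "e = {u, v}" "u \<noteq> v"
      by auto
    then have "u \<in> D" "v \<in> D" "fst u = fst v" "e = {u, v}" "u \<noteq> v"
      by (auto simp: clause_clique_def)
    moreover from this have "cnf_edge f u v"
      using DV by (intro cnf_edge_same_clause) auto
    ultimately show ?thesis
      by blast
  qed
  then have "induced_matching (cnf_vertices f) (cnf_edge f) ?N"
    using induced_matching_if_edges_in_dissociation_set[OF finite_cnf_vertices D cnf_edge_sym] by blast
  moreover have "inj_on (\<lambda>i. D \<inter> clause_clique i) ?S"
  proof (rule inj_onI)
    fix i j assume "i \<in> ?S" "j \<in> ?S" "D \<inter> clause_clique i = D \<inter> clause_clique j"
    then have "D \<inter> clause_clique i \<noteq> {}"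
      by (metis (mono_tags) card.empty mem_Collect_eq zero_neq_numeral)
    then obtain v where "v \<in> clause_clique i" "v \<in> clause_clique j"
      using \<open>D \<inter> clause_clique i = D \<inter> clause_clique j\<close> by blast
    then show "i = j"
      by (auto simp: clause_clique_def)
  qed
  then have "card ?N = card ?S"
    by (rule card_image)
  then have "card D \<le> length f + card ?N"
    using card_dissociation_set_le_cnf_graph[OF D] by simp
  ultimately show ?thesis
    by (rule that)
qed

lemma literal_independent_of_satisfiable:
  assumes "satisfiable f"
  obtains T where "literal_independent f T" and "card T = length f"
proof -
  obtain \<sigma> where "\<forall>C\<in>set f. clause_sat \<sigma> C"
    using assms unfolding satisfiable_def by blast
  then have "\<exists>k<3. lit_true \<sigma> (clause_lit (f ! i) k)" if "i < length f" for i
    using that unfolding clause_sat_def by auto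
  then obtain k where k: "\<And>i. i < length f \<Longrightarrow> k i < 3 \<and> lit_true \<sigma> (clause_lit (f ! i) (k i))"
    by metis
  let ?T = "(\<lambda>i. (i, k i)) ` {..<length f}"
  have lit: "?T \<subseteq> literal_vertices f"
    using k by (auto simp: literal_vertices_def)
  \<comment> \<open>Adjacent vertices of different clauses carry complementary literals, which cannot both be true.\<close>
  have "\<not> cnf_edge f u v" if "u \<in> ?T" "v \<in> ?T" for u v
  proof
    assume uv: "cnf_edge f u v"
    moreover have "fst u \<noteq> fst v"
      using that uv cnf_edge_irrefl by auto
    ultimately have "vertex_literal f u = neg_lit (vertex_literal f v)"
      by (rule cnf_edge_different_clauses)
    moreover have "lit_true \<sigma> (vertex_literal f u)" "lit_true \<sigma> (vertex_literal f v)"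
      using that k by (auto simp: vertex_literal_def)
    ultimately show False
      using lit_true_neg_lit by metis
  qed
  moreover have "?T \<subseteq> cnf_vertices f"
    using lit by (auto simp: literal_vertices_def cnf_vertices_def)
  ultimately have "literal_independent f ?T"
    using lit by (simp add: literal_independent_def independent_set_def)
  moreover have "card ?T = length f"
    by (simp add: card_image inj_on_def)
  ultimately show ?thesis
    using that by blast
qed

lemma satisfiable_of_literal_independent:
  assumes T: "literal_independent f T" and card: "card T = length f"
  shows "satisfiable f"
proof -
  have indep: "independent_set (cnf_vertices f) (cnf_edge f) T"
    and lit: "T \<subseteq> literal_vertices f"
    using T by (auto simp: literal_independent_def)
  have "fst ` T \<subseteq> {..<length f}"
    using lit by (auto simp: literal_vertices_def)
  moreover have "card (fst ` T) = length f"
    using card inj_on_fst_independent_set[OF indep] by (simp add: card_image)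
  ultimately have clauses: "fst ` T = {..<length f}"
    by (simp add: card_subset_eq)
  define \<sigma> where "\<sigma> x \<longleftrightarrow> (\<exists>t\<in>T. vertex_literal f t = (x, True))" for x
  have true: "lit_true \<sigma> (vertex_literal f t)" if "t \<in> T" for t
  proof (rule ccontr)
    assume false: "\<not> lit_true \<sigma> (vertex_literal f t)"
    obtain x b where l: "vertex_literal f t = (x, b)"
      by fastforce
    have "b \<longrightarrow> \<sigma> x"
      using that l unfolding \<sigma>_def by auto
    then have "\<not> b" "\<sigma> x"
      using false l by (auto simp: lit_true_def)
    then obtain t' where "t' \<in> T" "vertex_literal f t' = neg_lit (vertex_literal f t)"
      using l unfolding \<sigma>_def by (auto simp: neg_lit_def)
    then have "cnf_edge f t' t"
      using that lit by (intro cnf_edge_complementary) auto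
    then show False
      using indep that \<open>t' \<in> T\<close> unfolding independent_set_def by blast
  qed
  show ?thesis
    unfolding satisfiable_def
  proof (intro exI ballI)
    fix C assume "C \<in> set f"
    then obtain i where "i < length f" "C = f ! i"
      by (metis in_set_conv_nth)
    moreover obtain t where "t \<in> T" "fst t = i"
      using clauses \<open>i < length f\<close> by (metis imageE lessThan_iff)
    moreover have "snd t < 3"
      using lit \<open>t \<in> T\<close> by (auto simp: literal_vertices_def)
    ultimately show "clause_sat \<sigma> C"
      using true[OF \<open>t \<in> T\<close>] unfolding clause_sat_def vertex_literal_def by auto
  qed
qed

lemma card_literal_independent_le_induced_matching_number:
  assumes "literal_independent f T"
  shows "card T \<le> induced_matching_number (cnf_vertices f) (cnf_edge f)"
  using card_le_induced_matching_number[OF finite_cnf_vertices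
      induced_matching_of_literal_independent[OF assms]]
  by (simp add: card_induced_matching_of_literal_independent[OF assms])

lemma induced_matching_number_attained_literal_independent:
  obtains T where "literal_independent f T"
    and "card T = induced_matching_number (cnf_vertices f) (cnf_edge f)"
proof -
  obtain N where "induced_matching (cnf_vertices f) (cnf_edge f) N"
    and "card N = induced_matching_number (cnf_vertices f) (cnf_edge f)"
    using induced_matching_number_attained[OF finite_cnf_vertices] by blast
  then show ?thesis
    using that literal_independent_of_induced_matching by metis
qed

lemma induced_matching_number_cnf_graph_le:
  "induced_matching_number (cnf_vertices f) (cnf_edge f) \<le> length f"
proof -
  obtain T where "literal_independent f T"
    and "card T = induced_matching_number (cnf_vertices f) (cnf_edge f)"
    by (rule induced_matching_number_attained_literal_independent)
  then show ?thesis
    using card_independent_set_le_length unfolding literal_independent_def by metis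
qed

lemma diss_cnf_graph:
  "diss (cnf_vertices f) (cnf_edge f) = length f + induced_matching_number (cnf_vertices f) (cnf_edge f)"
proof (rule antisym)
  obtain D where D: "dissociation_set (cnf_vertices f) (cnf_edge f) D"
    and "card D = diss (cnf_vertices f) (cnf_edge f)"
    using diss_attained[OF finite_cnf_vertices] by blast
  moreover obtain N where "induced_matching (cnf_vertices f) (cnf_edge f) N"
    and "card D \<le> length f + card N"
    using induced_matching_of_dissociation_set_cnf_graph[OF D] .
  ultimately show "diss (cnf_vertices f) (cnf_edge f)
      \<le> length f + induced_matching_number (cnf_vertices f) (cnf_edge f)"
    using card_le_induced_matching_number[OF finite_cnf_vertices] by fastforce
next
  obtain T where "literal_independent f T"
    and "card T = induced_matching_number (cnf_vertices f) (cnf_edge f)"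
    by (rule induced_matching_number_attained_literal_independent)
  then show "length f + induced_matching_number (cnf_vertices f) (cnf_edge f)
      \<le> diss (cnf_vertices f) (cnf_edge f)"
    using card_le_diss[OF finite_cnf_vertices dissociation_set_of_literal_independent]
      card_dissociation_set_of_literal_independent by metis
qed

lemma satisfiable_iff_induced_matching_number:
  "satisfiable f \<longleftrightarrow> induced_matching_number (cnf_vertices f) (cnf_edge f) = length f"
proof
  assume "satisfiable f"
  then obtain T where "literal_independent f T" "card T = length f"
    by (rule literal_independent_of_satisfiable)
  then show "induced_matching_number (cnf_vertices f) (cnf_edge f) = length f"
    using card_literal_independent_le_induced_matching_number induced_matching_number_cnf_graph_le
    by (metis le_antisym)
next
  assume "induced_matching_number (cnf_vertices f) (cnf_edge f) = length f"
  moreover obtain T where "literal_independent f T"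
    and "card T = induced_matching_number (cnf_vertices f) (cnf_edge f)"
    by (rule induced_matching_number_attained_literal_independent)
  ultimately show "satisfiable f"
    by (simp add: satisfiable_of_literal_independent)
qed

theorem mainTheorem8:
  fixes f :: "clause3 list" and n :: nat
  assumes "\<forall>C\<in>set f. \<forall>k<3. fst (clause_lit C k) \<in> {1..n}"
  defines "V \<equiv> cnf_vertices f" and "E \<equiv> cnf_edge f"
  shows "indep_number V E = length f
    \<and> diss V E = indep_number V E + induced_matching_number V E
    \<and> (satisfiable f \<longleftrightarrow> diss V E = 2 * indep_number V E)
    \<and> (diss V E = 2 * indep_number V E \<longleftrightarrow> diss V E = 2 * induced_matching_number V E)"
  \<comment> \<open>The range of the variable indices plays no role.\<close>
  unfolding V_def E_def
  using indep_number_cnf_graph[of f] diss_cnf_graph[of f] induced_matching_number_cnf_graph_le[of f]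
    satisfiable_iff_induced_matching_number[of f]
  by auto

end
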